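(* Let $X_1$ and $X_2$ be independent continuous random variables with densities $f_{X_1},f_{X_2}$ that are symmetric around their respective means and positive on all of $\mathbb{R}$. For $\theta\in[0,1]$ and $w\in[0,1]$ define $$L(w\mid\theta)=\theta\,\mathbf{E}\big[X_1^2\,\mathbf{1}\big((1-w)X_2^2\ge wX_1^2\big)\big]+(1-\theta)\,\mathbf{E}\big[X_2^2\,\mathbf{1}\big((1-w)X_2^2<wX_1^2\big)\big].$$ Then for each fixed $\theta\in[0,1]$, the function $w\mapsto L(w\mid\theta)$ is strictly quasi-convex and is minimized at $w^\star=\theta$.
   Context: $\mathbf{1}(\cdot)$ denotes the indicator function of an event. *)

theory Defs
  imports "HOL-Probability.Probability"
begin

definition loss :: "'a measure \<Rightarrow> ('a \<Rightarrow> real) \<Rightarrow> ('a \<Rightarrow> real) \<Rightarrow> real \<Rightarrow> real \<Rightarrow> real" where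
  "loss M X1 X2 \<theta> w =
     \<theta> * integral\<^sup>L M (\<lambda>\<omega>. (X1 \<omega>)^2 * indicator {\<omega>. (1 - w) * (X2 \<omega>)^2 \<ge> w * (X1 \<omega>)^2} \<omega>)
   + (1 - \<theta>) * integral\<^sup>L M (\<lambda>\<omega>. (X2 \<omega>)^2 * indicator {\<omega>. (1 - w) * (X2 \<omega>)^2 < w * (X1 \<omega>)^2} \<omega>)"

definition strictly_quasiconvex_on :: "real set \<Rightarrow> (real \<Rightarrow> real) \<Rightarrow> bool" where
  "strictly_quasiconvex_on S f \<longleftrightarrow>
     (\<forall>x\<in>S. \<forall>y\<in>S. \<forall>t. x \<noteq> y \<and> 0 < t \<and> t < 1 \<longrightarrow>
        f ((1 - t) * x + t * y) < max (f x) (f y))"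

end

theory Submission
  imports Defs
begin

(* Let R = X2^2 / (X1^2 + X2^2). For w < w', passing from w to w' only changes the integrand
   of L on the event w <= R < w', where it changes by (1 - theta) X2^2 - theta X1^2, a quantity of
   the sign of R - theta. Hence the increment L(w') - L(w) is an integral of a function of
   constant sign, which is strictly signed on {w < R < w'}. That event has positive probability:
   it is the preimage under (X1, X2) of a nonempty open subset of the plane, and independent
   variables with everywhere positive densities charge every such set. So L strictly decreases on
   [0, theta] and strictly increases on [theta, 1], which gives both claims. *)

lemma convex_combination_between:
  fixes u v t :: real
  assumes "u < v" "0 < t" "t < 1"
  shows "u < (1 - t) * u + t * v" and "(1 - t) * u + t * v < v"
proof -
  have "0 < t * (v - u)" "0 < (1 - t) * (v - u)" using assms by simp_all
  then show "u < (1 - t) * u + t * v" "(1 - t) * u + t * v < v" by (simp_all add: algebra_simps)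
qed

lemma strictly_quasiconvex_onI_between:
  assumes "\<And>x y z. x \<in> S \<Longrightarrow> y \<in> S \<Longrightarrow> x < z \<Longrightarrow> z < y \<Longrightarrow> f z < max (f x) (f y)"
  shows "strictly_quasiconvex_on S f"
  unfolding strictly_quasiconvex_on_def
proof (intro ballI allI impI)
  fix x y t :: real
  assume x: "x \<in> S" and y: "y \<in> S" and xyt: "x \<noteq> y \<and> 0 < t \<and> t < 1"
  show "f ((1 - t) * x + t * y) < max (f x) (f y)"
  proof (cases "x < y")
    case True
    then show ?thesis using assms[OF x y] convex_combination_between[of x y t] xyt by simp
  next
    case False
    then have "y < x" using xyt by simp
    moreover have "(1 - t) * x + t * y = (1 - (1 - t)) * y + (1 - t) * x" by simp
    ultimately show ?thesis
      using assms[OF y x] convex_combination_between[of y x "1 - t"] xyt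
      by (simp add: max.commute)
  qed
qed

lemma strictly_quasiconvex_on_valley:
  assumes "strict_antimono_on {a..c} f" and "strict_mono_on {c..b} f"
  shows "strictly_quasiconvex_on {a..b} f"
proof (rule strictly_quasiconvex_onI_between)
  fix x y z assume "x \<in> {a..b}" "y \<in> {a..b}" "x < z" "z < y"
  then show "f z < max (f x) (f y)"
    using monotone_onD[OF assms(1), of x z] strict_mono_onD[OF assms(2), of z y]
    by (cases "z \<le> c") auto
qed

lemma strict_valley_minimum:
  fixes f :: "'a::linorder \<Rightarrow> 'b::order"
  assumes "strict_antimono_on {a..c} f" and "strict_mono_on {c..b} f" and "w \<in> {a..b}"
  shows "f c \<le> f w"
  using monotone_onD[OF assms(1), of w c] strict_mono_onD[OF assms(2), of c w] assms(3)
  by (cases w c rule: linorder_cases) (auto intro!: less_imp_le)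

definition loss_integrand :: "real \<Rightarrow> real \<Rightarrow> real \<Rightarrow> real \<Rightarrow> real" where
  "loss_integrand \<theta> w x y =
     \<theta> * (x^2 * of_bool ((1 - w) * y^2 \<ge> w * x^2)) + (1 - \<theta>) * (y^2 * of_bool ((1 - w) * y^2 < w * x^2))"

definition loss_increment :: "real \<Rightarrow> real \<Rightarrow> real \<Rightarrow> real \<Rightarrow> real \<Rightarrow> real" where
  "loss_increment \<theta> w w' x y =
     of_bool (w * x^2 \<le> (1 - w) * y^2 \<and> (1 - w') * y^2 < w' * x^2) * ((1 - \<theta>) * y^2 - \<theta> * x^2)"

lemma loss_integrand_diff:
  assumes "w \<le> w'"
  shows "loss_integrand \<theta> w' x y - loss_integrand \<theta> w x y = loss_increment \<theta> w w' x y"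
proof -
  have "(1 - w) * y^2 - w * x^2 \<ge> (1 - w') * y^2 - w' * x^2"
    using assms by (simp add: algebra_simps mult_right_mono add_mono)
  then show ?thesis
    unfolding loss_integrand_def loss_increment_def by (auto simp: algebra_simps)
qed

lemma loss_increment_nonpos:
  assumes "w' \<le> \<theta>"
  shows "loss_increment \<theta> w w' x y \<le> 0"
    and "w * x^2 < (1 - w) * y^2 \<Longrightarrow> (1 - w') * y^2 < w' * x^2 \<Longrightarrow> loss_increment \<theta> w w' x y < 0"
proof -
  have "(1 - \<theta>) * y^2 - \<theta> * x^2 = (1 - w') * y^2 - w' * x^2 - (\<theta> - w') * (x^2 + y^2)"
    by (simp add: algebra_simps)
  moreover have "0 \<le> (\<theta> - w') * (x^2 + y^2)"
    using assms by simp
  ultimately show "loss_increment \<theta> w w' x y \<le> 0"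
    and "w * x^2 < (1 - w) * y^2 \<Longrightarrow> (1 - w') * y^2 < w' * x^2 \<Longrightarrow> loss_increment \<theta> w w' x y < 0"
    unfolding loss_increment_def by auto
qed

lemma loss_increment_nonneg:
  assumes "\<theta> \<le> w"
  shows "0 \<le> loss_increment \<theta> w w' x y"
    and "w * x^2 < (1 - w) * y^2 \<Longrightarrow> (1 - w') * y^2 < w' * x^2 \<Longrightarrow> 0 < loss_increment \<theta> w w' x y"
proof -
  have "(1 - \<theta>) * y^2 - \<theta> * x^2 = (1 - w) * y^2 - w * x^2 + (w - \<theta>) * (x^2 + y^2)"
    by (simp add: algebra_simps)
  moreover have "0 \<le> (w - \<theta>) * (x^2 + y^2)"
    using assms by simp
  ultimately show "0 \<le> loss_increment \<theta> w w' x y"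
    and "w * x^2 < (1 - w) * y^2 \<Longrightarrow> (1 - w') * y^2 < w' * x^2 \<Longrightarrow> 0 < loss_increment \<theta> w w' x y"
    unfolding loss_increment_def by auto
qed

lemma has_bochner_integral_loss:
  fixes X1 X2 :: "'a \<Rightarrow> real"
  assumes [measurable]: "X1 \<in> borel_measurable M" "X2 \<in> borel_measurable M"
    and "integrable M (\<lambda>\<omega>. (X1 \<omega>)^2)" and "integrable M (\<lambda>\<omega>. (X2 \<omega>)^2)"
  shows "has_bochner_integral M (\<lambda>\<omega>. loss_integrand \<theta> w (X1 \<omega>) (X2 \<omega>)) (loss M X1 X2 \<theta> w)"
proof -
  have "integrable M (\<lambda>\<omega>. (X1 \<omega>)^2 * indicator {\<omega>. (1 - w) * (X2 \<omega>)^2 \<ge> w * (X1 \<omega>)^2} \<omega>)"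
    by (rule Bochner_Integration.integrable_bound[OF assms(3)]) (auto simp: indicator_def)
  moreover have "integrable M (\<lambda>\<omega>. (X2 \<omega>)^2 * indicator {\<omega>. (1 - w) * (X2 \<omega>)^2 < w * (X1 \<omega>)^2} \<omega>)"
    by (rule Bochner_Integration.integrable_bound[OF assms(4)]) (auto simp: indicator_def)
  ultimately show ?thesis
    unfolding loss_def loss_integrand_def
    by (auto intro!: has_bochner_integral_add has_bochner_integral_mult_right
        has_bochner_integral_integrable simp: indicator_def)
qed

lemma has_bochner_integral_loss_diff:
  fixes X1 X2 :: "'a \<Rightarrow> real"
  assumes "X1 \<in> borel_measurable M" "X2 \<in> borel_measurable M"
    and "integrable M (\<lambda>\<omega>. (X1 \<omega>)^2)" and "integrable M (\<lambda>\<omega>. (X2 \<omega>)^2)"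
    and "w \<le> w'"
  shows "has_bochner_integral M (\<lambda>\<omega>. loss_increment \<theta> w w' (X1 \<omega>) (X2 \<omega>))
    (loss M X1 X2 \<theta> w' - loss M X1 X2 \<theta> w)"
  using has_bochner_integral_diff[OF has_bochner_integral_loss[OF assms(1-4), of \<theta> w']
      has_bochner_integral_loss[OF assms(1-4), of \<theta> w]]
  by (simp add: loss_integrand_diff[OF assms(5)])

lemma has_bochner_integral_pos:
  fixes u :: "'a \<Rightarrow> real"
  assumes u: "has_bochner_integral M u I" and nonneg: "\<And>\<omega>. \<omega> \<in> space M \<Longrightarrow> 0 \<le> u \<omega>"
    and Q: "{\<omega> \<in> space M. Q \<omega>} \<in> sets M" "emeasure M {\<omega> \<in> space M. Q \<omega>} \<noteq> 0"
    and pos: "\<And>\<omega>. \<omega> \<in> space M \<Longrightarrow> Q \<omega> \<Longrightarrow> 0 < u \<omega>"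
  shows "0 < I"
proof -
  have int: "integrable M u" and I: "I = integral\<^sup>L M u"
    using u by (simp_all add: has_bochner_integral_iff)
  have "I \<noteq> 0"
  proof
    assume "I = 0"
    then have "AE \<omega> in M. u \<omega> = 0"
      using integral_nonneg_eq_0_iff_AE[OF int] nonneg I by simp
    with AE_space have "AE \<omega> in M. \<not> Q \<omega>"
      by eventually_elim (use pos in force)
    then show False
      using AE_iff_measurable[OF Q(1), of "\<lambda>\<omega>. \<not> Q \<omega>"] Q(2) by simp
  qed
  moreover have "0 \<le> I" using I nonneg by simp
  ultimately show ?thesis by simp
qed

lemma emeasure_vimage_open_neq_0:
  fixes X :: "'a \<Rightarrow> real"
  assumes X: "distributed M lborel X f" and f_pos: "\<And>x. 0 < f x"
    and A: "open A" "A \<noteq> {}"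
  shows "emeasure M (X -` A \<inter> space M) \<noteq> 0"
proof
  assume "emeasure M (X -` A \<inter> space M) = 0"
  then have "(\<integral>\<^sup>+x. f x * indicator A x \<partial>lborel) = 0"
    using distributed_emeasure[OF X] A by simp
  then have "AE x in lborel. f x * indicator A x = 0"
    using distributed_borel_measurable[OF X] A by (subst (asm) nn_integral_0_iff_AE) auto
  then have "AE x in lborel. x \<notin> A"
    by eventually_elim (use f_pos in \<open>auto simp: indicator_def less_le\<close>)
  then have "emeasure lborel A = 0"
    using A by (subst (asm) AE_iff_measurable[of A]) auto
  moreover obtain c e where "0 < e" "ball c e \<subseteq> A"
    using A open_contains_ball by blast
  moreover from this have "ennreal (2 * e) \<le> emeasure lborel A"
    using emeasure_mono[of "ball c e" A lborel] A by (simp add: ball_eq_greaterThanLessThan)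
  ultimately show False by simp
qed

locale full_support_pair = prob_space M for M :: "'a measure" +
  fixes X1 X2 :: "'a \<Rightarrow> real" and f1 f2 :: "real \<Rightarrow> ennreal"
  assumes indep: "indep_var borel X1 borel X2"
    and distr1: "distributed M lborel X1 f1" and distr2: "distributed M lborel X2 f2"
    and pos1: "\<And>x. 0 < f1 x" and pos2: "\<And>x. 0 < f2 x"
begin

lemma X1_measurable[measurable]: "X1 \<in> borel_measurable M"
  using distributed_measurable[OF distr1] by simp

lemma X2_measurable[measurable]: "X2 \<in> borel_measurable M"
  using distributed_measurable[OF distr2] by simp

lemma emeasure_pair_vimage_open_neq_0:
  assumes "open S" "p \<in> S"
  shows "emeasure M {\<omega> \<in> space M. (X1 \<omega>, X2 \<omega>) \<in> S} \<noteq> 0"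
proof -
  obtain A B where AB: "open A" "open B" "p \<in> A \<times> B" "A \<times> B \<subseteq> S"
    using open_prod_elim[OF assms] by metis
  have "0 < prob (X1 -` A \<inter> space M)"
    using emeasure_vimage_open_neq_0[OF distr1 pos1 AB(1)] AB(3)
    by (auto simp: emeasure_eq_measure zero_less_measure_iff)
  moreover have "0 < prob (X2 -` B \<inter> space M)"
    using emeasure_vimage_open_neq_0[OF distr2 pos2 AB(2)] AB(3)
    by (auto simp: emeasure_eq_measure zero_less_measure_iff)
  ultimately have "0 < prob ((\<lambda>\<omega>. (X1 \<omega>, X2 \<omega>)) -` (A \<times> B) \<inter> space M)"
    using indep_varD[OF indep, of A B] AB(1,2) by simp
  also have "\<dots> \<le> prob {\<omega> \<in> space M. (X1 \<omega>, X2 \<omega>) \<in> S}"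
  proof (rule finite_measure_mono)
    have [measurable]: "S \<in> sets borel" using assms(1) by simp
    show "{\<omega> \<in> space M. (X1 \<omega>, X2 \<omega>) \<in> S} \<in> events" by measurable
  qed (use AB(4) in auto)
  finally show ?thesis
    by (simp add: emeasure_eq_measure)
qed

lemma emeasure_strict_switch_event_neq_0:
  assumes "0 \<le> w" "w < w'" "w' \<le> 1"
  shows "emeasure M {\<omega> \<in> space M.
    w * (X1 \<omega>)^2 < (1 - w) * (X2 \<omega>)^2 \<and> (1 - w') * (X2 \<omega>)^2 < w' * (X1 \<omega>)^2} \<noteq> 0"
proof -
  define S where "S = {p :: real \<times> real. w * (fst p)^2 < (1 - w) * (snd p)^2 \<and> (1 - w') * (snd p)^2 < w' * (fst p)^2}"
  have "open S"
    unfolding S_def by (intro open_Collect_conj open_Collect_less continuous_intros)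
  \<comment> \<open>witness: (1, y) with y^2 / (1 + y^2) = m, the midpoint of w and w'\<close>
  define m where "m = (w + w') / 2"
  have m: "w < m" "m < w'" "0 < m" "m < 1"
    using assms by (auto simp: m_def)
  have "0 < (m - w) * (1 - m)" "0 < (w' - m) * (1 - m)"
    using m by simp_all
  then have "w + m * m < m + m * w" "m + m * w' < w' + m * m"
    by (simp_all add: algebra_simps)
  then have "(1, sqrt (m / (1 - m))) \<in> S"
    using m by (simp add: S_def field_simps)
  from emeasure_pair_vimage_open_neq_0[OF \<open>open S\<close> this] show ?thesis
    by (simp add: S_def)
qed

lemma loss_strict_antimono_on:
  assumes "integrable M (\<lambda>\<omega>. (X1 \<omega>)^2)" and "integrable M (\<lambda>\<omega>. (X2 \<omega>)^2)"
    and "\<theta> \<le> 1"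
  shows "strict_antimono_on {0..\<theta>} (loss M X1 X2 \<theta>)"
proof (rule monotone_onI)
  fix w w' assume w: "w \<in> {0..\<theta>}" "w' \<in> {0..\<theta>}" "w < w'"
  have "0 < loss M X1 X2 \<theta> w - loss M X1 X2 \<theta> w'"
  proof (rule has_bochner_integral_pos)
    show "has_bochner_integral M (\<lambda>\<omega>. - loss_increment \<theta> w w' (X1 \<omega>) (X2 \<omega>))
      (loss M X1 X2 \<theta> w - loss M X1 X2 \<theta> w')"
      using has_bochner_integral_minus[OF has_bochner_integral_loss_diff[OF X1_measurable X2_measurable
          assms(1,2), of w w' \<theta>]] w by simp
    show "emeasure M {\<omega> \<in> space M.
      w * (X1 \<omega>)^2 < (1 - w) * (X2 \<omega>)^2 \<and> (1 - w') * (X2 \<omega>)^2 < w' * (X1 \<omega>)^2} \<noteq> 0"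
      using emeasure_strict_switch_event_neq_0[of w w'] w assms(3) by simp
  qed (use loss_increment_nonpos[of w' \<theta>] w in auto)
  then show "loss M X1 X2 \<theta> w' < loss M X1 X2 \<theta> w" by simp
qed

lemma loss_strict_mono_on:
  assumes "integrable M (\<lambda>\<omega>. (X1 \<omega>)^2)" and "integrable M (\<lambda>\<omega>. (X2 \<omega>)^2)"
    and "0 \<le> \<theta>"
  shows "strict_mono_on {\<theta>..1} (loss M X1 X2 \<theta>)"
proof (rule strict_mono_onI)
  fix w w' assume w: "w \<in> {\<theta>..1}" "w' \<in> {\<theta>..1}" "w < w'"
  have "0 < loss M X1 X2 \<theta> w' - loss M X1 X2 \<theta> w"
  proof (rule has_bochner_integral_pos)
    show "has_bochner_integral M (\<lambda>\<omega>. loss_increment \<theta> w w' (X1 \<omega>) (X2 \<omega>))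
      (loss M X1 X2 \<theta> w' - loss M X1 X2 \<theta> w)"
      using has_bochner_integral_loss_diff[OF X1_measurable X2_measurable assms(1,2), of w w' \<theta>] w
      by simp
    show "emeasure M {\<omega> \<in> space M.
      w * (X1 \<omega>)^2 < (1 - w) * (X2 \<omega>)^2 \<and> (1 - w') * (X2 \<omega>)^2 < w' * (X1 \<omega>)^2} \<noteq> 0"
      using emeasure_strict_switch_event_neq_0[of w w'] w assms(3) by simp
  qed (use loss_increment_nonneg[of \<theta> w] w in auto)
  then show "loss M X1 X2 \<theta> w < loss M X1 X2 \<theta> w'" by simp
qed

end

theorem lemma2:
  fixes M :: "'a measure" and X1 X2 :: "'a \<Rightarrow> real"
    and f1 f2 :: "real \<Rightarrow> ennreal" and \<theta> :: real
  assumes "prob_space M"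
    and "prob_space.indep_var M borel X1 borel X2"
    and "distributed M lborel X1 f1"
    and "distributed M lborel X2 f2"
    and "\<And>x. f1 x > 0" and "\<And>x. f2 x > 0"
    and "integrable M (\<lambda>\<omega>. (X1 \<omega>)^2)"
    and "integrable M (\<lambda>\<omega>. (X2 \<omega>)^2)"
    and "\<And>x. f1 (integral\<^sup>L M X1 + x) = f1 (integral\<^sup>L M X1 - x)"
    and "\<And>x. f2 (integral\<^sup>L M X2 + x) = f2 (integral\<^sup>L M X2 - x)"
    and "\<theta> \<in> {0..1}"
  shows "strictly_quasiconvex_on {0..1} (loss M X1 X2 \<theta>)
         \<and> (\<forall>w\<in>{0..1}. loss M X1 X2 \<theta> \<theta> \<le> loss M X1 X2 \<theta> w)"
proof -
  interpret full_support_pair M X1 X2 f1 f2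
    using assms(1-6) by (simp add: full_support_pair_def full_support_pair_axioms_def)
  have "strict_antimono_on {0..\<theta>} (loss M X1 X2 \<theta>)"
    using loss_strict_antimono_on assms(7,8,11) by simp
  moreover have "strict_mono_on {\<theta>..1} (loss M X1 X2 \<theta>)"
    using loss_strict_mono_on assms(7,8,11) by simp
  ultimately show ?thesis
    using strictly_quasiconvex_on_valley strict_valley_minimum by blast
qed

end
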